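(* Let $x,y\in\mathbb{H}^2$ with $d(x,\partial\mathbb{H}^2)=d(y,\partial\mathbb{H}^2)=d$. (1) If $|x-y|>2d$, then $\tilde\tau_{\mathbb{H}^2}(x,y)=\log\Big(1+\sqrt{\tfrac{|x-y|}{d}}\Big)$. (2) If $|x-y|\le 2d$, then $\tilde\tau_{\mathbb{H}^2}(x,y)=\log\Big(1+\tfrac{2|x-y|}{\sqrt{4d^2+|x-y|^2}}\Big)$.
   Context: $\mathbb{H}^n=\{(x_1,\dots,x_n)\in\mathbb{R}^n: x_n>0\}$ is the upper half space, with boundary $\partial\mathbb{H}^n=\{x_n=0\}$ (in $\mathbb{R}^n$); $d(x,\partial D)$ is the Euclidean distance from $x$ to $\partial D$. For a proper subdomain $D\subsetneq\mathbb{R}^n$ and $x,y\in D$, $\tilde\tau_D(x,y)=\log\big(1+\sup_{p\in\partial D}\frac{|x-y|}{\sqrt{|x-p||y-p|}}\big)$ (the scale invariant Cassinian metric). *)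

theory Defs
  imports "HOL-Analysis.Analysis"
begin

text \<open>Upper half plane in R^2 (second coordinate is x_n).\<close>
definition upper_half_plane :: "(real^2) set" where
  "upper_half_plane = {z. z $ 2 > 0}"

definition cassinian_tilde :: "('a::real_normed_vector) set \<Rightarrow> 'a \<Rightarrow> 'a \<Rightarrow> real" where
  "cassinian_tilde D x y =
     ln (1 + (SUP p \<in> frontier D. dist x y / sqrt (dist x p * dist y p)))"

end

theory Submission
  imports Defs
begin

text \<open>
  Write \<open>x = (a, d)\<close>, \<open>y = (b, d)\<close> and \<open>s = |a - b| = |x - y|\<close>. For a boundary point
  \<open>p = (t, 0)\<close> the Cassinian quotient is \<open>s\<close> divided by the fourth root of
  \<open>P t = |x - p|\<^sup>2 |y - p|\<^sup>2 = (u\<^sup>2 + d\<^sup>2 - s\<^sup>2/4)\<^sup>2 + s\<^sup>2 d\<^sup>2\<close>, where \<open>u = t - (a + b)/2\<close>.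
  The supremum is therefore attained where \<open>P\<close> is minimal. If \<open>s > 2d\<close> the square
  vanishes for \<open>u\<^sup>2 = s\<^sup>2/4 - d\<^sup>2\<close> and \<open>min P = s\<^sup>2 d\<^sup>2\<close>; otherwise the square is
  minimal at \<open>u = 0\<close> and \<open>min P = (d\<^sup>2 + s\<^sup>2/4)\<^sup>2\<close>.
\<close>

lemma dist_vec2: "dist (u::real^2) v = sqrt ((u$1 - v$1)^2 + (u$2 - v$2)^2)"
  unfolding dist_norm norm_vec_def L2_set_def sum_2 by (simp add: dist_real_def power2_abs)

lemma frontier_upper_half_plane:
  "frontier upper_half_plane = range (\<lambda>t. vector [t, 0] :: real^2)"
proof -
  have "upper_half_plane = {z. axis 2 (1::real) \<bullet> z > 0}"
    unfolding upper_half_plane_def by (simp add: cart_eq_inner_axis inner_commute)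
  moreover have "frontier {z. axis 2 (1::real) \<bullet> z > 0} = {z::real^2. axis 2 1 \<bullet> z = 0}"
    using frontier_halfspace_gt[of "axis 2 (1::real)" 0] by (simp add: axis_eq_0_iff)
  ultimately have "frontier upper_half_plane = {z::real^2. axis 2 1 \<bullet> z = 0}"
    by simp
  also have "\<dots> = {z. z$2 = 0}"
    by (simp add: cart_eq_inner_axis inner_commute)
  also have "\<dots> = range (\<lambda>t. vector [t, 0])"
    by (auto simp: vec_eq_iff forall_2 intro!: image_eqI[where x = "_ $ 1"])
  finally show ?thesis .
qed

lemma infdist_frontier_upper_half_plane:
  assumes "x \<in> upper_half_plane"
  shows "infdist x (frontier upper_half_plane) = x$2"
proof -
  have dist_boundary: "dist x (vector [t, 0]) = sqrt ((x$1 - t)^2 + (x$2)^2)" for t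
    by (simp add: dist_vec2)
  have "(INF t. dist x (vector [t, 0])) = x$2"
  proof (rule antisym)
    show "(INF t. dist x (vector [t, 0])) \<le> x$2"
      using cINF_lower[of "\<lambda>t. dist x (vector [t, 0])" UNIV "x$1"] assms
      by (fastforce simp: dist_boundary upper_half_plane_def bdd_below_def intro: zero_le_dist)
    show "x$2 \<le> (INF t. dist x (vector [t, 0]))"
      by (rule cINF_greatest) (auto simp: dist_boundary intro: real_le_rsqrt)
  qed
  then show ?thesis
    by (simp add: frontier_upper_half_plane infdist_notempty image_image)
qed

lemma cassinian_tilde_upper_half_plane:
  assumes "x$2 = d" "y$2 = d"
  shows "cassinian_tilde upper_half_plane x y
           = ln (1 + (SUP t. dist x y / sqrt (sqrt (((x$1 - t)^2 + d^2) * ((y$1 - t)^2 + d^2)))))"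
proof -
  have "dist x (vector [t, 0]) * dist y (vector [t, 0])
          = sqrt (((x$1 - t)^2 + d^2) * ((y$1 - t)^2 + d^2))" for t
    using assms by (simp add: dist_vec2 real_sqrt_mult)
  then show ?thesis
    by (simp add: cassinian_tilde_def frontier_upper_half_plane image_image)
qed

lemma cassinian_product_identity:
  fixes a b d t :: real
  shows "((a - t)^2 + d^2) * ((b - t)^2 + d^2)
           = ((t - (a + b)/2)^2 + d^2 - (a - b)^2/4)^2 + (a - b)^2 * d^2"
  by (simp add: field_simps power2_eq_square)

lemma SUP_div_root4_eq_minimum:
  fixes P :: "'a \<Rightarrow> real"
  assumes "\<And>t. m \<le> P t" "P t\<^sub>0 = m" "0 < m" "0 \<le> s"
  shows "(SUP t. s / sqrt (sqrt (P t))) = s / sqrt (sqrt m)"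
  by (rule cSup_eq_maximum) (use assms in \<open>auto intro!: frac_le\<close>)

lemma cassinian_tilde_upper_half_plane_far:
  assumes "x$2 = d" "y$2 = d" "d > 0" "dist x y > 2 * d"
  shows "cassinian_tilde upper_half_plane x y = ln (1 + sqrt (dist x y / d))"
proof -
  define s a b where "s = dist x y" and "a = x$1" and "b = y$1"
  have s_sq: "(a - b)^2 = s^2"
    using assms(1,2) by (simp add: s_def a_def b_def dist_vec2)
  have "(2 * d)^2 < s^2"
    using assms(3,4) unfolding s_def by (intro power_strict_mono) auto
  then have gap: "0 \<le> s^2/4 - d^2"
    by (simp add: power_mult_distrib)
  have "s > 0"
    using assms(3,4) unfolding s_def by linarith
  define t\<^sub>0 where "t\<^sub>0 = (a + b)/2 + sqrt (s^2/4 - d^2)"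
  have "(SUP t. s / sqrt (sqrt (((a - t)^2 + d^2) * ((b - t)^2 + d^2))))
          = s / sqrt (sqrt (s^2 * d^2))"
  proof (rule SUP_div_root4_eq_minimum)
    show "s^2 * d^2 \<le> ((a - t)^2 + d^2) * ((b - t)^2 + d^2)" for t
      by (simp add: cassinian_product_identity s_sq)
    show "((a - t\<^sub>0)^2 + d^2) * ((b - t\<^sub>0)^2 + d^2) = s^2 * d^2"
      using gap by (simp add: cassinian_product_identity s_sq t\<^sub>0_def)
  qed (use assms(3) \<open>s > 0\<close> in auto)
  also have "\<dots> = sqrt (s / d)"
  proof -
    have "sqrt (s^2 * d^2) = s * d" and "s = sqrt s * sqrt s"
      using \<open>s > 0\<close> assms(3) by (simp_all add: real_sqrt_mult)
    then show ?thesis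
      using \<open>s > 0\<close> assms(3) by (simp add: real_sqrt_mult real_sqrt_divide field_simps)
  qed
  finally show ?thesis
    using assms(1,2) by (simp add: cassinian_tilde_upper_half_plane s_def a_def b_def)
qed

lemma cassinian_tilde_upper_half_plane_near:
  assumes "x$2 = d" "y$2 = d" "d > 0" "dist x y \<le> 2 * d"
  shows "cassinian_tilde upper_half_plane x y
           = ln (1 + 2 * dist x y / sqrt (4 * d^2 + (dist x y)^2))"
proof -
  define s a b where "s = dist x y" and "a = x$1" and "b = y$1"
  have s_sq: "(a - b)^2 = s^2"
    using assms(1,2) by (simp add: s_def a_def b_def dist_vec2)
  have "s^2 \<le> (2 * d)^2"
    using assms(4) unfolding s_def by (intro power_mono) auto
  then have gap: "0 \<le> d^2 - s^2/4"
    by (simp add: power_mult_distrib)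
  have sum_sq: "(d^2 + s^2/4)^2 = (d^2 - s^2/4)^2 + s^2 * d^2"
    by (simp add: power2_eq_square algebra_simps)
  have "(SUP t. s / sqrt (sqrt (((a - t)^2 + d^2) * ((b - t)^2 + d^2))))
          = s / sqrt (sqrt ((d^2 + s^2/4)^2))"
  proof (rule SUP_div_root4_eq_minimum)
    show "(d^2 + s^2/4)^2 \<le> ((a - t)^2 + d^2) * ((b - t)^2 + d^2)" for t
    proof -
      have "(d^2 - s^2/4)^2 \<le> ((t - (a + b)/2)^2 + (d^2 - s^2/4))^2"
        using gap by (intro power_mono) auto
      moreover have "((a - t)^2 + d^2) * ((b - t)^2 + d^2)
                       = ((t - (a + b)/2)^2 + (d^2 - s^2/4))^2 + s^2 * d^2"
        by (simp add: cassinian_product_identity s_sq add_diff_eq)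
      ultimately show ?thesis
        using sum_sq by linarith
    qed
    have "((a - (a + b)/2)^2 + d^2) * ((b - (a + b)/2)^2 + d^2) = (d^2 - s^2/4)^2 + s^2 * d^2"
      by (simp add: cassinian_product_identity s_sq add_diff_eq)
    then show "((a - (a + b)/2)^2 + d^2) * ((b - (a + b)/2)^2 + d^2) = (d^2 + s^2/4)^2"
      using sum_sq by linarith
  qed (use assms(3) s_def in \<open>simp_all add: add_pos_nonneg add_nonneg_eq_0_iff\<close>)
  also have "\<dots> = 2 * s / sqrt (4 * d^2 + s^2)"
  proof -
    have "sqrt ((d^2 + s^2/4)^2) = d^2 + s^2/4"
      by simp
    moreover have "sqrt (d^2 + s^2/4) = sqrt (4 * d^2 + s^2) / 2"
      using real_sqrt_divide[of "4 * d^2 + s^2" 4] by (simp add: add_divide_distrib real_sqrt_four)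
    ultimately show ?thesis
      by (simp only:) simp
  qed
  finally show ?thesis
    using assms(1,2) by (simp add: cassinian_tilde_upper_half_plane s_def a_def b_def)
qed

theorem lemma3p9:
  fixes x y :: "real^2" and d :: real
  assumes "x \<in> upper_half_plane" and "y \<in> upper_half_plane"
    and "infdist x (frontier upper_half_plane) = d"
    and "infdist y (frontier upper_half_plane) = d"
  shows "(dist x y > 2 * d \<longrightarrow>
            cassinian_tilde upper_half_plane x y = ln (1 + sqrt (dist x y / d)))
       \<and> (dist x y \<le> 2 * d \<longrightarrow>
            cassinian_tilde upper_half_plane x y
              = ln (1 + 2 * dist x y / sqrt (4 * d^2 + (dist x y)^2)))"
proof -
  have "x$2 = d" "y$2 = d"
    using assms infdist_frontier_upper_half_plane by auto
  moreover have "d > 0"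
    using assms(1) \<open>x$2 = d\<close> by (simp add: upper_half_plane_def)
  ultimately show ?thesis
    using cassinian_tilde_upper_half_plane_far cassinian_tilde_upper_half_plane_near by blast
qed

end
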